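(* With $d=\delta(1-\delta)$, $x(p)=\frac{p^2-d(1-p)^2}{p^2+d(1-p)^2}$ and $R_v^{\max}(n)=n\big(1-(1-x(p)^2)^{1/(2n)}\big)$ as the maximal saved resource for $n$ nodes (defined on the region $p^2\ge d(1-p)^2$, $p<1$), for every fixed $n\ge1$ and fixed $\delta\in[1/2,1)$, $R_v^{\max}(n)$ is a non-decreasing function of $p$ on that region; i.e., as the noisy state $\rho(p,\delta)$ becomes noisier (closer to the separable state $|01\rangle\langle01|$), the maximal saved resource increases.
   Context: $\rho(p,\delta)=p|01\rangle\langle01|+(1-p)|\zeta_\delta\rangle\langle\zeta_\delta|$ with $|\zeta_\delta\rangle=\sqrt\delta|00\rangle+\sqrt{1-\delta}|11\rangle$. In the $n$-node repeater where segment $S_1$ shares $\rho(p,\delta)$ and all $n$ free segments share the same pure state of concurrence $\mathcal{C}$, end-to-end optimal fully entangled fraction equal to that of $\rho(p,\delta)$ is achieved whenever $\frac{1+\sqrt{1-\mathcal{C}^{2n}}}{2}\le\frac{p^2}{p^2+d(1-p)^2}$; the saved resource is $R_v=n(1-\mathcal{C})$, and $R_v^{\max}(n)$ is its maximum over $\mathcal{C}$ satisfying this condition. *)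

theory Defs
  imports Complex_Main
begin

definition dpar :: "real \<Rightarrow> real" where
  "dpar \<delta> = \<delta> * (1 - \<delta>)"

definition xfun :: "real \<Rightarrow> real \<Rightarrow> real" where
  "xfun \<delta> p = (p^2 - dpar \<delta> * (1 - p)^2) / (p^2 + dpar \<delta> * (1 - p)^2)"

definition Rv_max :: "nat \<Rightarrow> real \<Rightarrow> real \<Rightarrow> real" where
  "Rv_max n \<delta> p = real n * (1 - (1 - (xfun \<delta> p)^2) powr (1 / (2 * real n)))"

definition region :: "real \<Rightarrow> real set" where
  "region \<delta> = {p. 0 \<le> p \<and> p < 1 \<and> dpar \<delta> * (1 - p)^2 \<le> p^2}"

end

theory Submission
  imports Defs
begin

text \<open>The saved resource depends on \<open>p\<close> only through \<open>x(p)\<close>, and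
\<open>x \<mapsto> n (1 - (1 - x\<^sup>2)\<^bsup>1/(2n)\<^esup>)\<close> is non-decreasing on \<open>[0,1]\<close>. So it
suffices that \<open>x\<close> is non-decreasing on the region, where it takes values in \<open>[0,1]\<close>.
Cross-multiplying, \<open>x(q) - x(p)\<close> has the sign of
\<open>2d ((q(1-p))\<^sup>2 - (p(1-q))\<^sup>2)\<close>, which is non-negative for \<open>0 < p \<le> q \<le> 1\<close>.\<close>

lemma dpar_pos: "0 < \<delta> \<Longrightarrow> \<delta> < 1 \<Longrightarrow> dpar \<delta> > 0"
  unfolding dpar_def by simp

lemma region_pos:
  assumes "dpar \<delta> > 0" and "p \<in> region \<delta>"
  shows "0 < p"
  using assms unfolding region_def by (auto simp: order_le_less)

lemma xfun_nonneg: "p \<in> region \<delta> \<Longrightarrow> dpar \<delta> \<ge> 0 \<Longrightarrow> 0 \<le> xfun \<delta> p"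
  unfolding region_def xfun_def by (auto intro!: divide_nonneg_nonneg)

lemma xfun_le_one: "xfun \<delta> p \<le> 1" if "dpar \<delta> \<ge> 0"
proof -
  have "0 \<le> p\<^sup>2 + dpar \<delta> * (1 - p)\<^sup>2"
    using that by simp
  then show ?thesis
    unfolding xfun_def using that by (subst divide_le_eq_1) (auto simp: order_le_less)
qed

lemma xfun_mono:
  assumes d: "dpar \<delta> > 0" and "0 < p" "p \<le> q" "q \<le> 1"
  shows "xfun \<delta> p \<le> xfun \<delta> q"
proof -
  let ?d = "dpar \<delta>"
  have den_p: "p\<^sup>2 + ?d * (1 - p)\<^sup>2 > 0" and den_q: "q\<^sup>2 + ?d * (1 - q)\<^sup>2 > 0"
    using assms by (simp_all add: add_pos_nonneg)
  have "p * (1 - q) \<le> q * (1 - p)"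
    using assms by (simp add: algebra_simps)
  then have squares: "(p * (1 - q))\<^sup>2 \<le> (q * (1 - p))\<^sup>2"
    using assms by (intro power_mono) auto
  have "(q\<^sup>2 - ?d * (1 - q)\<^sup>2) * (p\<^sup>2 + ?d * (1 - p)\<^sup>2)
      - (p\<^sup>2 - ?d * (1 - p)\<^sup>2) * (q\<^sup>2 + ?d * (1 - q)\<^sup>2)
      = 2 * ?d * ((q * (1 - p))\<^sup>2 - (p * (1 - q))\<^sup>2)"
    by (simp add: algebra_simps power2_eq_square)
  also have "\<dots> \<ge> 0"
    using d squares by simp
  finally have "(p\<^sup>2 - ?d * (1 - p)\<^sup>2) * (q\<^sup>2 + ?d * (1 - q)\<^sup>2)
      \<le> (q\<^sup>2 - ?d * (1 - q)\<^sup>2) * (p\<^sup>2 + ?d * (1 - p)\<^sup>2)"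
    by simp
  then show ?thesis
    unfolding xfun_def using den_p den_q by (simp add: divide_simps)
qed

lemma one_minus_square_powr_antimono:
  fixes x y a :: real
  assumes "0 \<le> x" "x \<le> y" "y \<le> 1" "0 \<le> a"
  shows "(1 - y\<^sup>2) powr a \<le> (1 - x\<^sup>2) powr a"
proof -
  have "x\<^sup>2 \<le> y\<^sup>2" and "y\<^sup>2 \<le> 1"
    using assms by (auto intro: power_mono simp: power_le_one)
  then show ?thesis
    using assms by (intro powr_mono2) auto
qed

theorem mainTheorem7:
  fixes n :: nat and \<delta> :: real
  assumes "n \<ge> 1" and "1/2 \<le> \<delta>" and "\<delta> < 1"
  shows "mono_on (region \<delta>) (Rv_max n \<delta>)"
proof (rule mono_onI)
  fix p q assume p: "p \<in> region \<delta>" and q: "q \<in> region \<delta>" and "p \<le> q"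
  have d: "dpar \<delta> > 0"
    using assms by (intro dpar_pos) auto
  have "xfun \<delta> p \<le> xfun \<delta> q"
    using d region_pos[OF d p] \<open>p \<le> q\<close> q by (intro xfun_mono) (auto simp: region_def)
  then have "(1 - (xfun \<delta> q)\<^sup>2) powr (1 / (2 * real n))
      \<le> (1 - (xfun \<delta> p)\<^sup>2) powr (1 / (2 * real n))"
    using d p by (intro one_minus_square_powr_antimono xfun_nonneg xfun_le_one) auto
  then show "Rv_max n \<delta> p \<le> Rv_max n \<delta> q"
    unfolding Rv_max_def by (intro mult_left_mono) auto
qed

end
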